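(* Suppose Assumption 1 holds and let $\gamma\in(0,1]$. (i) Let $x\in\operatorname{dom}\psi$, let $H$ be symmetric with $Q^x_H$ $\sigma$-strongly convex for some $\sigma>0$, and let $d$ satisfy the $\eta$-inexactness condition for $Q^x_H$ for some $\eta\in[0,1)$. If $$(1-\gamma)\frac{1-\sqrt\eta}{1+\sqrt\eta}\,\sigma + \lambda_{\min}(H)\ge L,$$ then the sufficient decrease condition $F(x)-F(x+d)\ge -\gamma Q^x_H(d)\ge 0$ holds. (ii) Consequently, in Algorithm 2 (with every computed $d^k$ satisfying the $\eta$-inexactness condition for a fixed $\eta\in[0,1)$), if the initial matrix satisfies $m_0 I\preceq H^0_k\preceq M_0 I$ for some $M_0>0$ and $m_0\le M_0$, then for Variant 2 the final (accepted) $H_k$ satisfies $\|H_k\|\le \tilde M_2(\eta)$; and for Variant 1, if in addition $m_0>0$, the final $H_k$ satisfies $\|H_k\|\le\tilde M_1(\eta)$.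
   Context: Problem setting: $F(x)=f(x)+\psi(x)$ on $\mathbb{R}^n$. Assumption 1: $f:\mathbb{R}^n\to\mathbb{R}$ is differentiable with $L$-Lipschitz continuous gradient for some $L>0$; $\psi:\mathbb{R}^n\to\mathbb{R}\cup\{+\infty\}$ is convex, proper and closed; $F$ is bounded below; and the solution set $\Omega=\{x: F(x)=F^*\}$, $F^*=\inf F$, is nonempty. For $x\in\mathbb{R}^n$ and a symmetric matrix $H$, $Q^x_H(d) \coloneqq \nabla f(x)^T d + \frac12 d^T H d + \psi(x+d) - \psi(x)$ (so $Q^x_H(0)=0$) and $Q^*\coloneqq\inf_d Q^x_H(d)$. A vector $d$ satisfies the $\eta$-inexactness condition (for $Q=Q^x_H$) if $Q(d)-Q^*\le \eta(Q(0)-Q^* )$, equivalently $Q(d)\le(1-\eta)Q^*$. $\lambda_{\min}(H)$ is the smallest eigenvalue, $\|H\|$ the spectral norm. Algorithm 2: given $\beta\in(0,1)$, $\gamma\in(0,1]$, $x^0$, and fixed $\eta\in[0,1)$; for $k=0,1,2,\dots$: choose a symmetric initial matrix $H^0_k$ (in Variant 1, $H^0_k\succ0$); set $\alpha_k\leftarrow1$, $H_k\leftarrow H^0_k$, and compute $d^k$ satisfying the $\eta$-inexactness condition for $Q^{x^k}_{H_k}$; while the sufficient decrease condition $F(x^k)-F(x^k+d^k)\ge -\gamma Q^{x^k}_{H_k}(d^k)\ge 0$ fails: in Variant 1 set $\alpha_k\leftarrow\beta\alpha_k$ and $H_k\leftarrow H^0_k/\alpha_k$; in Variant 2 set $H_k\leftarrow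 H^0_k+\alpha_k^{-1}I$ and then $\alpha_k\leftarrow\beta\alpha_k$; then recompute $d^k$ satisfying the $\eta$-inexactness condition for $Q^{x^k}_{H_k}$. Finally set $x^{k+1}=x^k+d^k$. The "final" $H_k$ is the matrix for which the sufficient decrease condition is accepted. Constants: $\tilde M_2(\eta)\coloneqq M_0+\max\left\{1,\ \frac1\beta\left(\frac{L(1+\sqrt\eta)}{2-\gamma(1-\sqrt\eta)}-m_0\right)\right\}$ and $\tilde M_1(\eta)\coloneqq M_0\max\left\{1,\ \frac{L(1+\sqrt\eta)}{\beta(2-\gamma(1-\sqrt\eta))m_0}\right\}$. *)

theory Defs
  imports "HOL-Analysis.Analysis"
begin

definition edom :: "('a \<Rightarrow> ereal) \<Rightarrow> 'a set" where
  "edom h = {x. h x < \<infinity>}"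

definition econvex :: "('a::real_vector \<Rightarrow> ereal) \<Rightarrow> bool" where
  "econvex h \<longleftrightarrow> convex {(x, r::real). h x \<le> ereal r}"

definition eproper :: "('a \<Rightarrow> ereal) \<Rightarrow> bool" where
  "eproper h \<longleftrightarrow> (\<forall>x. h x \<noteq> -\<infinity>) \<and> (\<exists>x. h x \<noteq> \<infinity>)"

definition eclosed :: "('a::topological_space \<Rightarrow> ereal) \<Rightarrow> bool" where
  "eclosed h \<longleftrightarrow> closed {(x, r::real). h x \<le> ereal r}"

definition estrongly_convex :: "real \<Rightarrow> ('a::real_normed_vector \<Rightarrow> ereal) \<Rightarrow> bool" where
  "estrongly_convex \<sigma> h \<longleftrightarrow>
     (\<forall>a b t. 0 < t \<and> t < 1 \<longrightarrow>
        h (t *\<^sub>R a + (1 - t) *\<^sub>R b)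
          \<le> ereal t * h a + ereal (1 - t) * h b - ereal (\<sigma> / 2 * t * (1 - t) * (norm (a - b))\<^sup>2))"

definition symmetric_mat :: "real^'n^'n \<Rightarrow> bool" where
  "symmetric_mat H \<longleftrightarrow> transpose H = H"

text \<open>Smallest eigenvalue (the eigenvalue set of a real symmetric matrix is finite and nonempty).\<close>
definition lambda_min :: "real^'n^'n \<Rightarrow> real" where
  "lambda_min H = Inf {\<mu>. \<exists>v. v \<noteq> 0 \<and> H *v v = \<mu> *\<^sub>R v}"

definition spec_norm :: "real^'n^'n \<Rightarrow> real" where
  "spec_norm H = onorm (\<lambda>v. H *v v)"

definition loewner_le :: "real^'n^'n \<Rightarrow> real^'n^'n \<Rightarrow> bool" where
  "loewner_le A B \<longleftrightarrow> (\<forall>v. v \<bullet> (A *v v) \<le> v \<bullet> (B *v v))"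

definition Fobj :: "(real^'n \<Rightarrow> real) \<Rightarrow> (real^'n \<Rightarrow> ereal) \<Rightarrow> real^'n \<Rightarrow> ereal" where
  "Fobj f \<psi> x = ereal (f x) + \<psi> x"

text \<open>Q^x_H(d), with g the gradient of f.\<close>
definition Qm :: "(real^'n \<Rightarrow> real^'n) \<Rightarrow> (real^'n \<Rightarrow> ereal) \<Rightarrow> real^'n \<Rightarrow> real^'n^'n \<Rightarrow> real^'n \<Rightarrow> ereal" where
  "Qm g \<psi> x H d = ereal (g x \<bullet> d + 1/2 * (d \<bullet> (H *v d))) + \<psi> (x + d) - \<psi> x"

definition inexact :: "real \<Rightarrow> ('a \<Rightarrow> ereal) \<Rightarrow> 'a::zero \<Rightarrow> bool" where
  "inexact \<eta> Q d \<longleftrightarrow> Q d - (INF e. Q e) \<le> ereal \<eta> * (Q 0 - (INF e. Q e))"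

definition suff_dec :: "(real^'n \<Rightarrow> real) \<Rightarrow> (real^'n \<Rightarrow> ereal) \<Rightarrow> (real^'n \<Rightarrow> ereal)
    \<Rightarrow> real \<Rightarrow> real^'n \<Rightarrow> real^'n \<Rightarrow> bool" where
  "suff_dec f \<psi> Q \<gamma> x d \<longleftrightarrow>
     Fobj f \<psi> x - Fobj f \<psi> (x + d) \<ge> - (ereal \<gamma> * Q d) \<and> - (ereal \<gamma> * Q d) \<ge> 0"

text \<open>Trial matrices of the backtracking loop (i = number of rejections so far).
  Variant 1: alpha = beta^i and H = H0 / alpha.
  Variant 2: H = H0 at i = 0, and H = H0 + beta^(-(i-1)) I afterwards.\<close>
definition cand1 :: "real \<Rightarrow> real^'n^'n \<Rightarrow> nat \<Rightarrow> real^'n^'n" where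
  "cand1 \<beta> H0 i = (1 / \<beta> ^ i) *\<^sub>R H0"

definition cand2 :: "real \<Rightarrow> real^'n^'n \<Rightarrow> nat \<Rightarrow> real^'n^'n" where
  "cand2 \<beta> H0 i = (if i = 0 then H0 else H0 + (1 / \<beta> ^ (i - 1)) *\<^sub>R mat 1)"

text \<open>A run of Algorithm 2 with trial-matrix rule cand: x k are the iterates, H0 k the
  initial matrices, J k the number of rejected trials in iteration k (so the final
  matrix is cand (H0 k) (J k)), and D k i the direction computed for the i-th trial.\<close>
definition alg2_run :: "(real^'n^'n \<Rightarrow> nat \<Rightarrow> real^'n^'n) \<Rightarrow> (real^'n \<Rightarrow> real)
    \<Rightarrow> (real^'n \<Rightarrow> real^'n) \<Rightarrow> (real^'n \<Rightarrow> ereal) \<Rightarrow> real \<Rightarrow> real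
    \<Rightarrow> (nat \<Rightarrow> real^'n) \<Rightarrow> (nat \<Rightarrow> real^'n^'n) \<Rightarrow> (nat \<Rightarrow> nat) \<Rightarrow> (nat \<Rightarrow> nat \<Rightarrow> real^'n) \<Rightarrow> bool" where
  "alg2_run cand f g \<psi> \<gamma> \<eta> x H0 J D \<longleftrightarrow>
     (\<forall>k. symmetric_mat (H0 k)) \<and>
     (\<forall>k i. i \<le> J k \<longrightarrow> inexact \<eta> (Qm g \<psi> (x k) (cand (H0 k) i)) (D k i)) \<and>
     (\<forall>k i. i < J k \<longrightarrow> \<not> suff_dec f \<psi> (Qm g \<psi> (x k) (cand (H0 k) i)) \<gamma> (x k) (D k i)) \<and>
     (\<forall>k. suff_dec f \<psi> (Qm g \<psi> (x k) (cand (H0 k) (J k))) \<gamma> (x k) (D k (J k))) \<and>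
     (\<forall>k. x (Suc k) = x k + D k (J k))"

definition M2tilde :: "real \<Rightarrow> real \<Rightarrow> real \<Rightarrow> real \<Rightarrow> real \<Rightarrow> real \<Rightarrow> real" where
  "M2tilde L \<beta> \<gamma> m0 M0 \<eta> =
     M0 + max 1 ((1 / \<beta>) * (L * (1 + sqrt \<eta>) / (2 - \<gamma> * (1 - sqrt \<eta>)) - m0))"

definition M1tilde :: "real \<Rightarrow> real \<Rightarrow> real \<Rightarrow> real \<Rightarrow> real \<Rightarrow> real \<Rightarrow> real" where
  "M1tilde L \<beta> \<gamma> m0 M0 \<eta> =
     M0 * max 1 (L * (1 + sqrt \<eta>) / (\<beta> * (2 - \<gamma> * (1 - sqrt \<eta>)) * m0))"

end

theory Submission
  imports Defs
begin

text \<open>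
  Part (i): the descent lemma gives F(x) - F(x + d) \<ge> -Q(d) + (\<lambda>_min(H) - L)/2 |d|^2.
  Strong convexity of Q on the segment from 0 to d, evaluated at t = 1/(1 + \<surd>\<eta>), together with
  the \<eta>-inexactness of d, gives \<sigma>/2 (1 - \<surd>\<eta>)/(1 + \<surd>\<eta>) |d|^2 \<le> -Q(d); the hypothesis on
  \<lambda>_min(H) makes this large enough to cover the deficit (L - \<lambda>_min(H))/2 |d|^2 with the share
  1 - \<gamma> of -Q(d).

  Part (ii): a symmetric H makes Q \<lambda>_min(H)-strongly convex, so by part (i) every trial matrix
  with \<lambda>_min(H) \<ge> T = L(1 + \<surd>\<eta>)/(2 - \<gamma>(1 - \<surd>\<eta>)) is accepted. Hence the trial matrix
  preceding the accepted one has \<lambda>_min < T, and since the trial matrices grow by the factor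
  1/\<beta> (in the shift, resp. the scaling) this bounds the accepted one through the Loewner
  bounds on H0.
\<close>

section \<open>Symmetric matrices and the Loewner order\<close>

lemma symmetric_mat_inner_commute:
  fixes H :: "real^'n^'n"
  assumes "symmetric_mat H"
  shows "u \<bullet> (H *v w) = (H *v u) \<bullet> w"
proof -
  have "u \<bullet> (H *v w) = (u v* H) \<bullet> w" by (simp add: dot_lmul_matrix)
  also have "u v* H = H *v u"
    using assms vector_transpose_matrix[of u H] by (simp add: symmetric_mat_def)
  finally show ?thesis .
qed

lemma symmetric_mat_add_scaleR_mat1:
  "symmetric_mat H \<Longrightarrow> symmetric_mat (H + c *\<^sub>R mat 1)"
  unfolding symmetric_mat_def by (simp add: vec_eq_iff transpose_def mat_def)

lemma symmetric_mat_scaleR: "symmetric_mat H \<Longrightarrow> symmetric_mat (c *\<^sub>R H)"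
  by (simp add: symmetric_mat_def transpose_scalar)

lemma inner_scaleR_mat1_mult: "(w::real^'n) \<bullet> ((c *\<^sub>R mat 1) *v w) = c * (norm w)\<^sup>2"
  by (simp flip: scaleR_matrix_vector_assoc add: power2_norm_eq_inner)

lemma loewner_le_add_scaleR_mat1:
  "loewner_le A B \<Longrightarrow> loewner_le (A + c *\<^sub>R mat 1) (B + c *\<^sub>R mat 1)"
  by (simp add: loewner_le_def matrix_vector_mult_add_rdistrib inner_add_right)

lemma loewner_le_scaleR:
  "0 \<le> c \<Longrightarrow> loewner_le A B \<Longrightarrow> loewner_le (c *\<^sub>R A) (c *\<^sub>R B)"
  by (simp add: loewner_le_def scaleR_matrix_vector_assoc[symmetric] mult_left_mono)

lemma quadratic_nonneg_imp_linear_zero: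
  fixes c k :: real
  assumes "\<And>t. 0 \<le> 2 * t * c + t\<^sup>2 * k"
  shows "c = 0"
proof (rule ccontr)
  assume "c \<noteq> 0"
  define t where "t = - c / (\<bar>k\<bar> + 1)"
  have "t\<^sup>2 * k \<le> t\<^sup>2 * (\<bar>k\<bar> + 1)" by (intro mult_left_mono) auto
  also have "\<dots> = - (t * c)" by (simp add: t_def power2_eq_square)
  finally have "0 \<le> t * c" using assms[of t] by linarith
  moreover have "t * c < 0"
    using \<open>c \<noteq> 0\<close> by (simp add: t_def divide_neg_pos power2_eq_square[symmetric])
  ultimately show False by simp
qed

lemma psd_mat_kernel:
  fixes A :: "real^'n^'n"
  assumes sym: "symmetric_mat A" and psd: "\<And>w. 0 \<le> w \<bullet> (A *v w)"
    and v: "v \<bullet> (A *v v) = 0"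
  shows "A *v v = 0"
proof -
  have "w \<bullet> (A *v v) = 0" for w
  proof (rule quadratic_nonneg_imp_linear_zero)
    fix t :: real
    have "v \<bullet> (A *v w) = w \<bullet> (A *v v)"
      using symmetric_mat_inner_commute[OF sym, of v w] by (simp add: inner_commute)
    then have "(v + t *\<^sub>R w) \<bullet> (A *v (v + t *\<^sub>R w))
        = 2 * t * (w \<bullet> (A *v v)) + t\<^sup>2 * (w \<bullet> (A *v w))"
      using v by (simp add: matrix_vector_right_distrib matrix_vector_mult_scaleR inner_add_left
          inner_add_right power2_eq_square algebra_simps)
    then show "0 \<le> 2 * t * (w \<bullet> (A *v v)) + t\<^sup>2 * (w \<bullet> (A *v w))"
      using psd[of "v + t *\<^sub>R w"] by simp
  qed
  from this[of "A *v v"] show ?thesis by simp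
qed

text \<open>Proof: a minimiser of the Rayleigh quotient on the unit sphere is an eigenvector.\<close>
lemma symmetric_mat_min_eigenvector:
  fixes H :: "real^'n^'n"
  assumes sym: "symmetric_mat H"
  obtains v \<mu> where "v \<noteq> 0" "H *v v = \<mu> *\<^sub>R v" "\<And>w. \<mu> * (norm w)\<^sup>2 \<le> w \<bullet> (H *v w)"
proof -
  have "axis undefined 1 \<in> sphere (0::real^'n) 1" by simp
  then have ne: "sphere (0::real^'n) 1 \<noteq> {}" by blast
  have "continuous_on (sphere 0 1) (\<lambda>w::real^'n. w \<bullet> (H *v w))"
    by (intro continuous_intros)
  then obtain v where v: "v \<in> sphere (0::real^'n) 1"
    and vmin: "\<And>y. y \<in> sphere 0 1 \<Longrightarrow> v \<bullet> (H *v v) \<le> y \<bullet> (H *v y)"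
    using continuous_attains_inf[OF compact_sphere ne] by blast
  define \<mu> where "\<mu> = v \<bullet> (H *v v)"
  have ray: "\<mu> * (norm w)\<^sup>2 \<le> w \<bullet> (H *v w)" for w
  proof (cases "w = 0")
    case False
    then have "\<mu> \<le> (w /\<^sub>R norm w) \<bullet> (H *v (w /\<^sub>R norm w))"
      using vmin[of "w /\<^sub>R norm w"] by (simp add: \<mu>_def)
    also have "\<dots> = (w \<bullet> (H *v w)) / (norm w)\<^sup>2"
      by (simp add: matrix_vector_mult_scaleR power2_eq_square divide_inverse)
    finally show ?thesis using False by (simp add: field_simps)
  qed simp
  define A where "A = H - \<mu> *\<^sub>R mat 1"
  have Aw: "w \<bullet> (A *v w) = w \<bullet> (H *v w) - \<mu> * (norm w)\<^sup>2" for w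
    by (simp add: A_def matrix_vector_mult_diff_rdistrib inner_diff_right inner_scaleR_mat1_mult)
  have "A *v v = 0"
  proof (rule psd_mat_kernel)
    show "symmetric_mat A"
      using symmetric_mat_add_scaleR_mat1[OF sym, of "- \<mu>"] by (simp add: A_def)
    show "0 \<le> w \<bullet> (A *v w)" for w using ray[of w] by (simp add: Aw)
    show "v \<bullet> (A *v v) = 0" using v by (simp add: Aw \<mu>_def)
  qed
  then have "H *v v = \<mu> *\<^sub>R v"
    by (simp add: A_def matrix_vector_mult_diff_rdistrib scaleR_matrix_vector_assoc[symmetric])
  moreover have "v \<noteq> 0" using v by auto
  ultimately show thesis using that ray by blast
qed

lemma lambda_min_least_eigenvalue:
  fixes H :: "real^'n^'n"
  assumes sym: "symmetric_mat H"
  shows "\<exists>v. v \<noteq> 0 \<and> H *v v = lambda_min H *\<^sub>R v"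
    and "lambda_min H * (norm w)\<^sup>2 \<le> w \<bullet> (H *v w)"
proof -
  obtain v \<mu> where v: "v \<noteq> 0" "H *v v = \<mu> *\<^sub>R v"
    and ray: "\<And>w. \<mu> * (norm w)\<^sup>2 \<le> w \<bullet> (H *v w)"
    using symmetric_mat_min_eigenvector[OF sym] by blast
  have "lambda_min H = \<mu>"
    unfolding lambda_min_def
  proof (rule cInf_eq_minimum)
    show "\<mu> \<in> {\<mu>. \<exists>v. v \<noteq> 0 \<and> H *v v = \<mu> *\<^sub>R v}" using v by blast
  next
    fix l assume "l \<in> {\<mu>. \<exists>v. v \<noteq> 0 \<and> H *v v = \<mu> *\<^sub>R v}"
    then obtain u where u: "u \<noteq> 0" "H *v u = l *\<^sub>R u" by blast
    have "\<mu> * (norm u)\<^sup>2 \<le> l * (norm u)\<^sup>2"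
      using ray[of u] u by (simp add: power2_norm_eq_inner)
    then show "\<mu> \<le> l" using u by simp
  qed
  then show "\<exists>v. v \<noteq> 0 \<and> H *v v = lambda_min H *\<^sub>R v"
    and "lambda_min H * (norm w)\<^sup>2 \<le> w \<bullet> (H *v w)"
    using v ray by auto
qed

lemma lambda_min_ge_loewner:
  fixes H :: "real^'n^'n"
  assumes sym: "symmetric_mat H" and "loewner_le (a *\<^sub>R mat 1) H"
  shows "a \<le> lambda_min H"
proof -
  obtain v where v: "v \<noteq> 0" "H *v v = lambda_min H *\<^sub>R v"
    using lambda_min_least_eigenvalue(1)[OF sym] by blast
  have "a * (norm v)\<^sup>2 \<le> lambda_min H * (norm v)\<^sup>2"
    using assms(2) v unfolding loewner_le_def
    by (metis inner_scaleR_mat1_mult inner_scaleR_right power2_norm_eq_inner)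
  then show ?thesis using v by simp
qed

lemma spec_norm_le_quadratic_bound:
  fixes H :: "real^'n^'n"
  assumes sym: "symmetric_mat H" and bound: "\<And>w. \<bar>w \<bullet> (H *v w)\<bar> \<le> K * (norm w)\<^sup>2"
  shows "spec_norm H \<le> K"
  unfolding spec_norm_def
proof (rule onorm_le)
  fix w :: "real^'n"
  have K: "0 \<le> K" using bound[of "axis undefined 1"] by (simp add: zero_le_mult_iff)
  text \<open>Polarisation: 4 u\<bullet>Hw is the difference of the forms at u + w and u - w.\<close>
  have polar: "2 * (u \<bullet> (H *v w)) \<le> K * ((norm u)\<^sup>2 + (norm w)\<^sup>2)" for u
  proof -
    have "4 * (u \<bullet> (H *v w)) = (u + w) \<bullet> (H *v (u + w)) - (u - w) \<bullet> (H *v (u - w))"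
      using symmetric_mat_inner_commute[OF sym, of w u]
      by (simp add: matrix_vector_right_distrib matrix_vector_mult_diff_distrib inner_add_left
          inner_add_right inner_diff_left inner_diff_right inner_commute)
    also have "\<dots> \<le> K * (norm (u + w))\<^sup>2 + K * (norm (u - w))\<^sup>2"
      using bound[of "u + w"] bound[of "u - w"] by linarith
    also have "\<dots> = 2 * K * ((norm u)\<^sup>2 + (norm w)\<^sup>2)"
      by (simp add: power2_norm_eq_inner inner_add_left inner_add_right inner_diff_left
          inner_diff_right inner_commute algebra_simps)
    finally show ?thesis by simp
  qed
  show "norm (H *v w) \<le> K * norm w"
  proof (cases "H *v w = 0")
    case False
    define u where "u = (norm w / norm (H *v w)) *\<^sub>R (H *v w)"
    have "2 * (norm w * norm (H *v w)) \<le> K * (2 * (norm w)\<^sup>2)"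
      using polar[of u] False
      by (simp add: u_def power2_norm_eq_inner[symmetric] power2_eq_square)
    then have "norm w * norm (H *v w) \<le> norm w * (K * norm w)"
      by (simp add: power2_eq_square algebra_simps)
    moreover have "w \<noteq> 0" using False by auto
    ultimately show ?thesis by simp
  qed (use K in simp)
qed

lemma spec_norm_le_loewner:
  fixes H :: "real^'n^'n"
  assumes sym: "symmetric_mat H"
    and "loewner_le (a *\<^sub>R mat 1) H" and "loewner_le H (b *\<^sub>R mat 1)"
  shows "spec_norm H \<le> max \<bar>a\<bar> \<bar>b\<bar>"
proof (rule spec_norm_le_quadratic_bound[OF sym])
  fix w :: "real^'n"
  have "a * (norm w)\<^sup>2 \<le> w \<bullet> (H *v w)" "w \<bullet> (H *v w) \<le> b * (norm w)\<^sup>2"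
    using assms(2,3) by (simp_all add: loewner_le_def inner_scaleR_mat1_mult)
  moreover have "- a \<le> max \<bar>a\<bar> \<bar>b\<bar>" "b \<le> max \<bar>a\<bar> \<bar>b\<bar>" by auto
  then have "- a * (norm w)\<^sup>2 \<le> max \<bar>a\<bar> \<bar>b\<bar> * (norm w)\<^sup>2"
    "b * (norm w)\<^sup>2 \<le> max \<bar>a\<bar> \<bar>b\<bar> * (norm w)\<^sup>2"
    by (simp_all only: mult_right_mono zero_le_power2)
  ultimately show "\<bar>w \<bullet> (H *v w)\<bar> \<le> max \<bar>a\<bar> \<bar>b\<bar> * (norm w)\<^sup>2" by linarith
qed

section \<open>The model function\<close>

lemma descent_lemma:
  fixes f :: "real^'n \<Rightarrow> real" and g :: "real^'n \<Rightarrow> real^'n"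
  assumes grad: "\<forall>x. GDERIV f x :> g x" and lip: "L-lipschitz_on UNIV g"
  shows "f (x + d) \<le> f x + g x \<bullet> d + L / 2 * (norm d)\<^sup>2"
proof -
  define \<phi> where "\<phi> t = f (x + t *\<^sub>R d) - t * (g x \<bullet> d) - L / 2 * t\<^sup>2 * (norm d)\<^sup>2" for t
  have df: "((\<lambda>t. f (x + t *\<^sub>R d)) has_real_derivative g (x + t *\<^sub>R d) \<bullet> d) (at t)" for t
  proof -
    have line: "((\<lambda>t. x + t *\<^sub>R d) has_derivative (\<lambda>s. s *\<^sub>R d)) (at t)"
      by (auto intro!: derivative_eq_intros)
    have "(f has_derivative (\<lambda>h. h \<bullet> g (x + t *\<^sub>R d))) (at (x + t *\<^sub>R d))"
      using grad unfolding gderiv_def by blast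
    from has_derivative_compose[OF line this]
    have "((\<lambda>t. f (x + t *\<^sub>R d)) has_derivative (\<lambda>s. (s *\<^sub>R d) \<bullet> g (x + t *\<^sub>R d))) (at t)" .
    then show ?thesis unfolding has_field_derivative_def
      by (rule has_derivative_eq_rhs) (auto simp: inner_commute)
  qed
  have d\<phi>: "(\<phi> has_real_derivative
      (g (x + t *\<^sub>R d) - g x) \<bullet> d - L * t * (norm d)\<^sup>2) (at t)" for t
    unfolding \<phi>_def by (auto intro!: derivative_eq_intros df simp: inner_diff_left)
  have "\<phi> 1 \<le> \<phi> 0"
  proof (rule DERIV_nonpos_imp_nonincreasing[of 0 1 \<phi>])
    fix t :: real assume t: "0 \<le> t" "t \<le> 1"
    have "(g (x + t *\<^sub>R d) - g x) \<bullet> d \<le> norm (g (x + t *\<^sub>R d) - g x) * norm d"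
      by (rule norm_cauchy_schwarz)
    also have "\<dots> \<le> L * (t * norm d) * norm d"
      using lipschitz_onD[OF lip, of "x + t *\<^sub>R d" x] t
      by (intro mult_right_mono) (auto simp: dist_norm)
    finally have "(g (x + t *\<^sub>R d) - g x) \<bullet> d - L * t * (norm d)\<^sup>2 \<le> 0"
      by (simp add: power2_eq_square algebra_simps)
    then show "\<exists>y. (\<phi> has_real_derivative y) (at t) \<and> y \<le> 0" using d\<phi> by blast
  qed simp
  then show ?thesis by (simp add: \<phi>_def)
qed

definition smooth_model :: "(real^'n \<Rightarrow> real^'n) \<Rightarrow> real^'n \<Rightarrow> real^'n^'n \<Rightarrow> real^'n \<Rightarrow> real"
  where "smooth_model g x H d = g x \<bullet> d + 1/2 * (d \<bullet> (H *v d))"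

lemma Qm_cases:
  assumes proper: "eproper \<psi>" and px: "\<psi> x = ereal px"
  obtains "\<psi> (x + d) = \<infinity>" and "Qm g \<psi> x H d = \<infinity>"
    | r where "\<psi> (x + d) = ereal r" and "Qm g \<psi> x H d = ereal (smooth_model g x H d + r - px)"
proof -
  have "\<psi> (x + d) \<noteq> -\<infinity>" using proper by (simp add: eproper_def)
  then show thesis
    using that by (cases "\<psi> (x + d)") (auto simp: Qm_def px smooth_model_def)
qed

lemma Qm_zero: "\<psi> x = ereal px \<Longrightarrow> Qm g \<psi> x H 0 = 0"
  by (simp add: Qm_def)

lemma Qm_le_ereal_iff:
  assumes "eproper \<psi>" and "\<psi> x = ereal px"
  shows "Qm g \<psi> x H d \<le> ereal c \<longleftrightarrow> \<psi> (x + d) \<le> ereal (c - smooth_model g x H d + px)"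
  by (rule Qm_cases[OF assms, of d g H]) auto

lemma closed_Qm_sublevel:
  assumes proper: "eproper \<psi>" and px: "\<psi> x = ereal px" and closed: "eclosed \<psi>"
  shows "closed {d. Qm g \<psi> x H d \<le> ereal c}"
proof -
  let ?E = "{(y, r::real). \<psi> y \<le> ereal r}"
  let ?h = "\<lambda>d. (x + d, c - smooth_model g x H d + px)"
  have "{d. Qm g \<psi> x H d \<le> ereal c} = ?h -` ?E"
    using Qm_le_ereal_iff[OF proper px] by auto
  moreover have "closed (?h -` ?E)"
  proof (rule continuous_closed_vimage)
    show "closed ?E" using closed by (simp add: eclosed_def)
    show "continuous (at d) ?h" for d
      unfolding smooth_model_def by (intro continuous_intros)
  qed
  ultimately show ?thesis by simp
qed

lemma Qm_bounded_below_on_cball: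
  assumes proper: "eproper \<psi>" and px: "\<psi> x = ereal px" and closed: "eclosed \<psi>"
  obtains m where "\<And>d. d \<in> cball 0 1 \<Longrightarrow> ereal m \<le> Qm g \<psi> x H d"
proof (rule ccontr)
  let ?Q = "Qm g \<psi> x H"
  assume "\<not> thesis"
  then have "\<forall>n::nat. \<exists>d\<in>cball 0 1. ?Q d < ereal (- real n)"
    using that by (meson not_le)
  then obtain dn where dn: "\<And>n. dn n \<in> cball 0 1" "\<And>n. ?Q (dn n) < ereal (- real n)"
    by metis
  obtain l r where r: "strict_mono (r :: nat \<Rightarrow> nat)" and lim: "(dn \<circ> r) \<longlonglongrightarrow> l"
    using compact_imp_seq_compact[OF compact_cball] dn(1) unfolding seq_compact_def by metis
  text \<open>The limit lies in every closed sublevel set, so Q l = -\<infinity>, contradicting properness.\<close>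
  have "?Q l \<le> ereal c" for c
  proof -
    obtain N :: nat where N: "- c \<le> real N" using real_arch_simple by blast
    have "?Q (dn (r n)) \<le> ereal c" if "n \<ge> N" for n
    proof -
      have "real N \<le> real (r n)" using seq_suble[OF r, of n] that by simp
      then have "ereal (- real (r n)) \<le> ereal c" using N by simp
      then show ?thesis using dn(2)[of "r n"] by (meson less_imp_le order_trans)
    qed
    then have "\<forall>\<^sub>F n in sequentially. (dn \<circ> r) n \<in> {d. ?Q d \<le> ereal c}"
      by (auto simp: eventually_sequentially)
    from Lim_in_closed_set[OF closed_Qm_sublevel[OF proper px closed] this _ lim]
    show ?thesis by simp
  qed
  then have "?Q l = -\<infinity>" by (metis MInfty_neq_ereal(1) ereal_bot)
  then show False by (cases rule: Qm_cases[OF proper px, of l g H]) auto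
qed

lemma estrongly_convex_Qm_ray:
  assumes px: "\<psi> x = ereal px" and sc: "estrongly_convex \<sigma> (Qm g \<psi> x H)"
    and t: "0 < t" "t < 1"
  shows "Qm g \<psi> x H (t *\<^sub>R a)
    \<le> ereal t * Qm g \<psi> x H a - ereal (\<sigma> / 2 * t * (1 - t) * (norm a)\<^sup>2)"
  using sc[unfolded estrongly_convex_def, rule_format, of t a 0] t by (simp add: Qm_zero[of \<psi> x px, OF px])

lemma quadratic_growth_lower_bound:
  fixes \<sigma> R m v :: real
  assumes \<sigma>: "\<sigma> > 0" and R: "R > 1"
    and h: "m \<le> (1 / R) * v - \<sigma> / 2 * (1 / R) * (1 - 1 / R) * R\<^sup>2"
  shows "- (m - \<sigma> / 2)\<^sup>2 / (2 * \<sigma>) \<le> v"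
proof -
  have "R * m \<le> R * ((1 / R) * v - \<sigma> / 2 * (1 / R) * (1 - 1 / R) * R\<^sup>2)"
    using h R by simp
  also have "\<dots> = v - \<sigma> / 2 * (R\<^sup>2 - R)"
    using R by (simp add: field_simps power2_eq_square)
  finally have v: "R * m + \<sigma> / 2 * (R\<^sup>2 - R) \<le> v" by simp
  have "0 \<le> (\<sigma> * R + (m - \<sigma> / 2))\<^sup>2 / (2 * \<sigma>)" using \<sigma> by simp
  also have "\<dots> = R * m + \<sigma> / 2 * (R\<^sup>2 - R) + (m - \<sigma> / 2)\<^sup>2 / (2 * \<sigma>)"
    using \<sigma> by (simp add: field_simps power2_eq_square)
  finally show ?thesis using v by (simp add: field_simps)
qed

text \<open>Outside the unit ball, strong convexity along the ray through d bounds Q(d) below in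
  terms of the value at the point d/|d| of the unit sphere.\<close>
lemma Qm_bounded_below:
  assumes proper: "eproper \<psi>" and px: "\<psi> x = ereal px" and closed: "eclosed \<psi>"
    and \<sigma>: "\<sigma> > 0" and sc: "estrongly_convex \<sigma> (Qm g \<psi> x H)"
  obtains B where "\<And>d. ereal B \<le> Qm g \<psi> x H d"
proof -
  let ?Q = "Qm g \<psi> x H"
  obtain m where m: "\<And>d. d \<in> cball 0 1 \<Longrightarrow> ereal m \<le> ?Q d"
    using Qm_bounded_below_on_cball[OF proper px closed] by blast
  define B where "B = min m (- (m - \<sigma> / 2)\<^sup>2 / (2 * \<sigma>))"
  have "ereal B \<le> ?Q d" for d
  proof (cases "norm d \<le> 1")
    case True
    then show ?thesis using m[of d] by (simp add: B_def order_trans[rotated])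
  next
    case False
    define t where "t = 1 / norm d"
    have t: "0 < t" "t < 1" using False by (auto simp: t_def divide_less_eq)
    have "d \<noteq> 0" using False by auto
    then have "norm (t *\<^sub>R d) = 1" by (simp add: t_def)
    then have "ereal m \<le> ereal t * ?Q d - ereal (\<sigma> / 2 * t * (1 - t) * (norm d)\<^sup>2)"
      using order_trans[OF m estrongly_convex_Qm_ray[OF px sc t]] by simp
    then show ?thesis
    proof (cases rule: Qm_cases[OF proper px, of d g H])
      case (2 r)
      then show ?thesis
        using \<open>ereal m \<le> _\<close> quadratic_growth_lower_bound[OF \<sigma>, of "norm d" m] False
        by (auto simp: B_def t_def min.coboundedI2)
    qed simp
  qed
  then show thesis by (rule that)
qed

lemma inexact_decrease_real:
  fixes \<eta> q u A :: real
  assumes \<eta>: "0 \<le> \<eta>" "\<eta> < 1" and u: "u \<le> (1 - \<eta>) * q"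
    and ray: "\<And>t. 0 < t \<Longrightarrow> t < 1 \<Longrightarrow> q \<le> t * u - A * t * (1 - t)"
  shows "A * ((1 - sqrt \<eta>) / (1 + sqrt \<eta>)) \<le> - u"
proof (cases "\<eta> = 0")
  case True
  have "t * A \<le> - u" if t: "0 < t" "t < 1" for t
  proof -
    have "(1 - t) * u \<le> (1 - t) * (- (t * A))"
      using ray[OF t] u True by (simp add: algebra_simps)
    then have "u \<le> - (t * A)" by (rule mult_left_le_imp_le) (use t in simp)
    then show ?thesis by simp
  qed
  then show ?thesis using True by (simp add: field_le_mult_one_interval)
next
  case False
  define s where "s = sqrt \<eta>"
  have s: "0 < s" "s < 1" using False \<eta> by (auto simp: s_def)
  text \<open>The optimal step along the segment is t = 1/(1 + \<surd>\<eta>).\<close>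
  define t where "t = 1 / (1 + s)"
  have t: "0 < t" "t < 1" using s by (auto simp: t_def)
  have t_inv: "(1 + s) * t = 1" using s by (simp add: t_def)
  have "u \<le> (1 - s) * (1 + s) * q"
    using u \<eta> by (simp add: s_def algebra_simps)
  also have "\<dots> \<le> (1 - s) * (1 + s) * (t * u - A * t * (1 - t))"
    using ray[OF t] s by (intro mult_left_mono) auto
  also have "\<dots> = (1 - s) * u - s * (A * ((1 - s) * t))"
    using t_inv by algebra
  also have "(1 - s) * t = (1 - s) / (1 + s)" by (simp add: t_def)
  finally have "s * u \<le> s * (- (A * ((1 - s) / (1 + s))))" by (simp add: algebra_simps)
  then have "u \<le> - (A * ((1 - s) / (1 + s)))" by (rule mult_left_le_imp_le) (use s in simp)
  then show ?thesis by (simp add: s_def)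
qed

lemma inexact_Qm_decrease:
  assumes proper: "eproper \<psi>" and closed: "eclosed \<psi>" and px: "\<psi> x = ereal px"
    and \<sigma>: "\<sigma> > 0" and sc: "estrongly_convex \<sigma> (Qm g \<psi> x H)"
    and \<eta>: "0 \<le> \<eta>" "\<eta> < 1" and inexact: "inexact \<eta> (Qm g \<psi> x H) d"
  obtains u where "Qm g \<psi> x H d = ereal u"
    and "\<sigma> / 2 * (norm d)\<^sup>2 * ((1 - sqrt \<eta>) / (1 + sqrt \<eta>)) \<le> - u"
proof -
  let ?Q = "Qm g \<psi> x H"
  obtain B where B: "\<And>e. ereal B \<le> ?Q e"
    using Qm_bounded_below[OF proper px closed \<sigma> sc] by blast
  have Q0: "?Q 0 = 0" by (rule Qm_zero[of \<psi> x px, OF px])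
  have "ereal B \<le> (INF e. ?Q e)" "(INF e. ?Q e) \<le> 0"
    using B INF_lower[of 0 UNIV ?Q] Q0 by (auto intro: INF_greatest)
  then obtain q where q: "(INF e. ?Q e) = ereal q" by (cases "INF e. ?Q e") auto
  have le_Q: "ereal q \<le> ?Q e" for e using INF_lower[of e UNIV ?Q] q by simp
  have "?Q d - ereal q \<le> ereal \<eta> * (- ereal q)"
    using inexact by (simp add: inexact_def q Q0)
  moreover from this have "?Q d \<noteq> \<infinity>" by auto
  moreover have "?Q d \<noteq> -\<infinity>" using le_Q[of d] by auto
  ultimately obtain u where Qu: "?Q d = ereal u" and "u - q \<le> \<eta> * (- q)"
    by (cases "?Q d") auto
  then have "u \<le> (1 - \<eta>) * q" by (simp add: algebra_simps)
  moreover have "q \<le> t * u - \<sigma> / 2 * (norm d)\<^sup>2 * t * (1 - t)" if "0 < t" "t < 1" for t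
  proof -
    have "ereal q \<le> ?Q (t *\<^sub>R d)" by (rule le_Q)
    also have "\<dots> \<le> ereal t * ?Q d - ereal (\<sigma> / 2 * t * (1 - t) * (norm d)\<^sup>2)"
      by (rule estrongly_convex_Qm_ray[OF px sc that])
    finally show ?thesis using Qu by (simp add: algebra_simps)
  qed
  ultimately show thesis using inexact_decrease_real[OF \<eta>] Qu that by blast
qed

lemma econvex_ereal_combination:
  assumes "econvex \<psi>" and "\<psi> a = ereal ra" "\<psi> b = ereal rb" and "0 \<le> t" "t \<le> 1"
  shows "\<psi> (t *\<^sub>R a + (1 - t) *\<^sub>R b) \<le> ereal (t * ra + (1 - t) * rb)"
proof -
  let ?E = "{(y, r::real). \<psi> y \<le> ereal r}"
  have "(a, ra) \<in> ?E" "(b, rb) \<in> ?E" using assms(2,3) by auto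
  with assms(1,4,5) have "t *\<^sub>R (a, ra) + (1 - t) *\<^sub>R (b, rb) \<in> ?E"
    unfolding econvex_def by (intro convexD) auto
  then show ?thesis by simp
qed

lemma symmetric_mat_quadratic_combination:
  fixes H :: "real^'n^'n"
  assumes sym: "symmetric_mat H"
  shows "t * (a \<bullet> (H *v a)) + (1 - t) * (b \<bullet> (H *v b))
         - (t *\<^sub>R a + (1 - t) *\<^sub>R b) \<bullet> (H *v (t *\<^sub>R a + (1 - t) *\<^sub>R b))
         = t * (1 - t) * ((a - b) \<bullet> (H *v (a - b)))"
proof -
  have "b \<bullet> (H *v a) = a \<bullet> (H *v b)"
    using symmetric_mat_inner_commute[OF sym, of b a] by (simp add: inner_commute)
  then show ?thesis
    by (simp add: matrix_vector_right_distrib matrix_vector_mult_scaleR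
        matrix_vector_mult_diff_distrib inner_add_left inner_add_right inner_diff_left
        inner_diff_right algebra_simps)
qed

lemma smooth_model_strongly_convex:
  fixes H :: "real^'n^'n"
  assumes sym: "symmetric_mat H" and ray: "\<And>w. \<mu> * (norm w)\<^sup>2 \<le> w \<bullet> (H *v w)"
    and t: "0 \<le> t" "t \<le> 1"
  shows "smooth_model g x H (t *\<^sub>R a + (1 - t) *\<^sub>R b)
    \<le> t * smooth_model g x H a + (1 - t) * smooth_model g x H b
      - \<mu> / 2 * t * (1 - t) * (norm (a - b))\<^sup>2"
proof -
  let ?c = "t *\<^sub>R a + (1 - t) *\<^sub>R b"
  have "t * (1 - t) * (\<mu> * (norm (a - b))\<^sup>2) \<le> t * (1 - t) * ((a - b) \<bullet> (H *v (a - b)))"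
    using ray t by (intro mult_left_mono) auto
  then have "?c \<bullet> (H *v ?c)
      \<le> t * (a \<bullet> (H *v a)) + (1 - t) * (b \<bullet> (H *v b)) - t * (1 - t) * (\<mu> * (norm (a - b))\<^sup>2)"
    using symmetric_mat_quadratic_combination[OF sym, of t a b] by linarith
  moreover have "g x \<bullet> ?c = t * (g x \<bullet> a) + (1 - t) * (g x \<bullet> b)"
    by (simp add: inner_add_right)
  ultimately show ?thesis
    unfolding smooth_model_def by (simp add: field_simps)
qed

lemma Qm_strongly_convex:
  fixes H :: "real^'n^'n"
  assumes convex: "econvex \<psi>" and proper: "eproper \<psi>" and px: "\<psi> x = ereal px"
    and sym: "symmetric_mat H" and ray: "\<And>w. \<mu> * (norm w)\<^sup>2 \<le> w \<bullet> (H *v w)"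
  shows "estrongly_convex \<mu> (Qm g \<psi> x H)"
  unfolding estrongly_convex_def
proof (intro allI impI)
  fix a b :: "real^'n" and t :: real
  assume t: "0 < t \<and> t < 1"
  let ?Q = "Qm g \<psi> x H" and ?c = "t *\<^sub>R a + (1 - t) *\<^sub>R b"
  let ?m = "smooth_model g x H"
  show "?Q ?c \<le> ereal t * ?Q a + ereal (1 - t) * ?Q b
      - ereal (\<mu> / 2 * t * (1 - t) * (norm (a - b))\<^sup>2)"
  proof (cases rule: Qm_cases[OF proper px, of a g H])
    case (2 ra)
    show ?thesis
    proof (cases rule: Qm_cases[OF proper px, of b g H])
      case (2 rb)
      have "\<psi> (x + ?c) \<le> ereal (t * ra + (1 - t) * rb)"
        using econvex_ereal_combination[OF convex \<open>\<psi> (x + a) = _\<close> \<open>\<psi> (x + b) = _\<close>, of t] t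
        by (simp add: algebra_simps)
      moreover have "?m ?c \<le> t * ?m a + (1 - t) * ?m b - \<mu> / 2 * t * (1 - t) * (norm (a - b))\<^sup>2"
        using smooth_model_strongly_convex[OF sym ray] t by simp
      ultimately show ?thesis
        using 2 \<open>?Q a = _\<close> Qm_le_ereal_iff[OF proper px]
        by (simp add: algebra_simps) (smt (verit) ereal_less_eq(3) order_trans)
    next
      case 1
      with t \<open>?Q a = _\<close> show ?thesis by (simp add: ereal_mult_infty)
    qed
  next
    case 1
    have "?Q b \<noteq> -\<infinity>" by (cases rule: Qm_cases[OF proper px, of b g H]) auto
    with t 1 show ?thesis by (simp add: ereal_mult_infty)
  qed
qed

section \<open>Sufficient decrease\<close>

lemma edom_ereal:
  assumes "eproper \<psi>" "x \<in> edom \<psi>"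
  obtains px where "\<psi> x = ereal px"
  using assms by (cases "\<psi> x") (auto simp: eproper_def edom_def)

lemma suff_dec_edom:
  assumes proper: "eproper \<psi>" and x: "x \<in> edom \<psi>" and dec: "suff_dec f \<psi> Q \<gamma> x d"
  shows "x + d \<in> edom \<psi>"
proof (rule ccontr)
  assume "x + d \<notin> edom \<psi>"
  moreover obtain px where "\<psi> x = ereal px" using edom_ereal[OF proper x] .
  ultimately have "Fobj f \<psi> x - Fobj f \<psi> (x + d) = -\<infinity>" by (simp add: Fobj_def edom_def)
  with dec show False unfolding suff_dec_def by auto
qed

lemma alg2_run_edom:
  assumes proper: "eproper \<psi>" and run: "alg2_run cand f g \<psi> \<gamma> \<eta> x H0 J D"
    and x0: "x 0 \<in> edom \<psi>"
  shows "x k \<in> edom \<psi>"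
proof (induction k)
  case (Suc k)
  have "suff_dec f \<psi> (Qm g \<psi> (x k) (cand (H0 k) (J k))) \<gamma> (x k) (D k (J k))"
    using run by (simp add: alg2_run_def)
  from suff_dec_edom[OF proper Suc this] show ?case
    using run by (simp add: alg2_run_def)
qed (use x0 in simp)

definition accept_threshold :: "real \<Rightarrow> real \<Rightarrow> real \<Rightarrow> real" where
  "accept_threshold L \<gamma> \<eta> = L * (1 + sqrt \<eta>) / (2 - \<gamma> * (1 - sqrt \<eta>))"

lemma accept_threshold_denominator_pos:
  assumes "\<gamma> \<le> 1" and "0 \<le> \<eta>" "\<eta> < 1"
  shows "0 < 2 - \<gamma> * (1 - sqrt \<eta>)"
proof -
  have "\<gamma> * (1 - sqrt \<eta>) \<le> 1"
    using assms by (intro mult_le_one) auto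
  then show ?thesis by simp
qed

lemma accept_threshold_equation:
  fixes s :: real
  assumes "0 \<le> s" and "0 < 2 - \<gamma> * (1 - s)"
  shows "L = (1 - \<gamma>) * ((1 - s) / (1 + s)) * (L * (1 + s) / (2 - \<gamma> * (1 - s)))
    + L * (1 + s) / (2 - \<gamma> * (1 - s))"
proof -
  have "1 + s \<noteq> 0" "2 - \<gamma> * (1 - s) \<noteq> 0" using assms by auto
  define T where "T = L * (1 + s) / (2 - \<gamma> * (1 - s))"
  have "(1 - \<gamma>) * ((1 - s) / (1 + s)) * T + T = ((1 - \<gamma>) * ((1 - s) / (1 + s)) + 1) * T"
    by (simp add: distrib_right)
  also have "(1 - \<gamma>) * ((1 - s) / (1 + s)) + 1 = (2 - \<gamma> * (1 - s)) / (1 + s)"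
    using \<open>1 + s \<noteq> 0\<close> by (simp add: field_simps)
  also have "\<dots> * T = L"
    using \<open>1 + s \<noteq> 0\<close> \<open>2 - \<gamma> * (1 - s) \<noteq> 0\<close> by (simp add: T_def)
  finally show ?thesis by (simp add: T_def)
qed

lemma accept_threshold_pos:
  assumes "L > 0" and "\<gamma> \<le> 1" and "0 \<le> \<eta>" "\<eta> < 1"
  shows "accept_threshold L \<gamma> \<eta> > 0"
  using assms accept_threshold_denominator_pos[OF assms(2-4)]
  by (simp add: accept_threshold_def add_pos_nonneg)

locale composite_problem =
  fixes f :: "real^'n \<Rightarrow> real" and g :: "real^'n \<Rightarrow> real^'n"
    and \<psi> :: "real^'n \<Rightarrow> ereal" and L :: real
  assumes gradient: "\<forall>x. GDERIV f x :> g x"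
    and L_pos: "L > 0"
    and lipschitz: "L-lipschitz_on UNIV g"
    and psi_convex: "econvex \<psi>" and psi_proper: "eproper \<psi>" and psi_closed: "eclosed \<psi>"
begin

lemma sufficient_decrease:
  assumes \<gamma>: "0 < \<gamma>" "\<gamma> \<le> 1" and x: "x \<in> edom \<psi>" and sym: "symmetric_mat H"
    and \<sigma>: "\<sigma> > 0" and sc: "estrongly_convex \<sigma> (Qm g \<psi> x H)"
    and \<eta>: "0 \<le> \<eta>" "\<eta> < 1" and inexact: "inexact \<eta> (Qm g \<psi> x H) d"
    and cond: "L \<le> (1 - \<gamma>) * ((1 - sqrt \<eta>) / (1 + sqrt \<eta>)) * \<sigma> + lambda_min H"
  shows "suff_dec f \<psi> (Qm g \<psi> x H) \<gamma> x d"
proof -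
  define \<kappa> where "\<kappa> = (1 - sqrt \<eta>) / (1 + sqrt \<eta>)"
  obtain px where px: "\<psi> x = ereal px" using edom_ereal[OF psi_proper x] .
  obtain u where Qu: "Qm g \<psi> x H d = ereal u" and model_dec: "\<sigma> / 2 * (norm d)\<^sup>2 * \<kappa> \<le> - u"
    unfolding \<kappa>_def by (rule inexact_Qm_decrease[OF psi_proper psi_closed px \<sigma> sc \<eta> inexact])
  obtain r where r: "\<psi> (x + d) = ereal r" and u: "u = smooth_model g x H d + r - px"
    by (rule Qm_cases[OF psi_proper px, of d g H]) (use Qu in auto)
  have "0 \<le> \<kappa>" using \<eta> by (simp add: \<kappa>_def)
  then have "0 \<le> \<sigma> / 2 * (norm d)\<^sup>2 * \<kappa>" using \<sigma> by simp
  then have "u \<le> 0" using model_dec by linarith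
  have "(L - lambda_min H) * (norm d)\<^sup>2 \<le> ((1 - \<gamma>) * \<kappa> * \<sigma>) * (norm d)\<^sup>2"
    using cond by (intro mult_right_mono) (auto simp: \<kappa>_def)
  also have "\<dots> = 2 * (1 - \<gamma>) * (\<sigma> / 2 * (norm d)\<^sup>2 * \<kappa>)" by simp
  also have "\<dots> \<le> 2 * (1 - \<gamma>) * (- u)"
    using model_dec \<gamma> by (intro mult_left_mono) auto
  finally have deficit: "L * (norm d)\<^sup>2 - lambda_min H * (norm d)\<^sup>2 \<le> 2 * (\<gamma> * u) - 2 * u"
    by (simp add: algebra_simps)
  have "f (x + d) \<le> f x + g x \<bullet> d + L / 2 * (norm d)\<^sup>2"
    by (rule descent_lemma[OF gradient lipschitz])
  moreover have "lambda_min H * (norm d)\<^sup>2 \<le> d \<bullet> (H *v d)"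
    by (rule lambda_min_least_eigenvalue(2)[OF sym])
  ultimately have "- (\<gamma> * u) \<le> f x + px - (f (x + d) + r)"
    using deficit u unfolding smooth_model_def by linarith
  moreover have "0 \<le> - (\<gamma> * u)" using \<gamma> \<open>u \<le> 0\<close> by (simp add: mult_nonneg_nonpos)
  ultimately show ?thesis
    by (simp add: suff_dec_def Fobj_def px r Qu)
qed

text \<open>Q is then \<lambda>_min(H)-strongly convex, and for \<sigma> = \<lambda>_min(H) the hypothesis of
  sufficient_decrease is equivalent to \<lambda>_min(H) \<ge> accept_threshold.\<close>
lemma suff_dec_if_lambda_min_ge:
  assumes \<gamma>: "0 < \<gamma>" "\<gamma> \<le> 1" and x: "x \<in> edom \<psi>" and sym: "symmetric_mat H"
    and \<eta>: "0 \<le> \<eta>" "\<eta> < 1" and inexact: "inexact \<eta> (Qm g \<psi> x H) d"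
    and ge: "accept_threshold L \<gamma> \<eta> \<le> lambda_min H"
  shows "suff_dec f \<psi> (Qm g \<psi> x H) \<gamma> x d"
proof -
  have pos: "0 < lambda_min H"
    using accept_threshold_pos[OF L_pos \<gamma>(2) \<eta>] ge by linarith
  obtain px where px: "\<psi> x = ereal px" using edom_ereal[OF psi_proper x] .
  have sc: "estrongly_convex (lambda_min H) (Qm g \<psi> x H)"
    by (rule Qm_strongly_convex[OF psi_convex psi_proper px sym lambda_min_least_eigenvalue(2)[OF sym]])
  have s: "0 \<le> sqrt \<eta>" "0 < 2 - \<gamma> * (1 - sqrt \<eta>)"
    using accept_threshold_denominator_pos[OF \<gamma>(2) \<eta>] \<eta> by auto
  have "L = (1 - \<gamma>) * ((1 - sqrt \<eta>) / (1 + sqrt \<eta>)) * accept_threshold L \<gamma> \<eta>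
      + accept_threshold L \<gamma> \<eta>"
    unfolding accept_threshold_def by (rule accept_threshold_equation[OF s])
  also have "\<dots> \<le> (1 - \<gamma>) * ((1 - sqrt \<eta>) / (1 + sqrt \<eta>)) * lambda_min H + lambda_min H"
    using ge \<gamma> \<eta> by (intro add_mono mult_left_mono) auto
  finally show ?thesis
    by (rule sufficient_decrease[OF \<gamma> x sym pos sc \<eta> inexact])
qed

lemma alg2_run_rejected_lambda_min:
  assumes run: "alg2_run cand f g \<psi> \<gamma> \<eta> x H0 J D" and x0: "x 0 \<in> edom \<psi>"
    and \<gamma>: "0 < \<gamma>" "\<gamma> \<le> 1" and \<eta>: "0 \<le> \<eta>" "\<eta> < 1"
    and sym: "symmetric_mat (cand (H0 k) i)" and rejected: "i < J k"
  shows "lambda_min (cand (H0 k) i) < accept_threshold L \<gamma> \<eta>"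
proof (rule ccontr)
  assume "\<not> ?thesis"
  moreover have "inexact \<eta> (Qm g \<psi> (x k) (cand (H0 k) i)) (D k i)"
    using run rejected by (simp add: alg2_run_def)
  ultimately have "suff_dec f \<psi> (Qm g \<psi> (x k) (cand (H0 k) i)) \<gamma> (x k) (D k i)"
    using suff_dec_if_lambda_min_ge[OF \<gamma> alg2_run_edom[OF psi_proper run x0] sym \<eta>] by simp
  then show False using run rejected by (simp add: alg2_run_def)
qed

subsection \<open>Bounds on the accepted matrices\<close>

lemma cand2_final_shift:
  assumes run: "alg2_run (cand2 \<beta>) f g \<psi> \<gamma> \<eta> x H0 J D" and x0: "x 0 \<in> edom \<psi>"
    and \<gamma>: "0 < \<gamma>" "\<gamma> \<le> 1" and \<eta>: "0 \<le> \<eta>" "\<eta> < 1" and \<beta>: "0 < \<beta>" "\<beta> < 1"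
    and lower: "loewner_le (m0 *\<^sub>R mat 1) (H0 k)"
  obtains c where "cand2 \<beta> (H0 k) (J k) = H0 k + c *\<^sub>R mat 1" and "0 \<le> c"
    and "c \<le> max 1 ((1 / \<beta>) * (accept_threshold L \<gamma> \<eta> - m0))"
proof (cases "J k")
  case 0
  then show thesis by (intro that[of 0]) (simp_all add: cand2_def)
next
  case (Suc j)
  show thesis
  proof (cases j)
    case 0
    with Suc show thesis by (intro that[of 1]) (simp_all add: cand2_def)
  next
    case (Suc i)
    text \<open>The trial matrix before the accepted one was rejected.\<close>
    let ?H = "H0 k + (1 / \<beta> ^ i) *\<^sub>R mat 1"
    have sym: "symmetric_mat ?H"
      using run by (simp add: alg2_run_def symmetric_mat_add_scaleR_mat1)
    have "loewner_le ((m0 + 1 / \<beta> ^ i) *\<^sub>R mat 1) ?H"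
      using loewner_le_add_scaleR_mat1[OF lower] by (simp add: scaleR_add_left)
    then have "m0 + 1 / \<beta> ^ i \<le> lambda_min ?H" by (rule lambda_min_ge_loewner[OF sym])
    moreover have "lambda_min ?H < accept_threshold L \<gamma> \<eta>"
      using alg2_run_rejected_lambda_min[OF run x0 \<gamma> \<eta>, of k "Suc i"] sym Suc \<open>J k = Suc j\<close>
      by (simp add: cand2_def)
    ultimately have "(1 / \<beta>) * (1 / \<beta> ^ i) \<le> (1 / \<beta>) * (accept_threshold L \<gamma> \<eta> - m0)"
      using \<beta> by (intro mult_left_mono) auto
    then show thesis
      using \<open>J k = Suc j\<close> Suc \<beta>
      by (intro that[of "(1 / \<beta>) * (1 / \<beta> ^ i)"]) (auto simp: cand2_def max.coboundedI2)
  qed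
qed

lemma cand2_final_spec_norm_le:
  assumes run: "alg2_run (cand2 \<beta>) f g \<psi> \<gamma> \<eta> x H0 J D" and x0: "x 0 \<in> edom \<psi>"
    and \<gamma>: "0 < \<gamma>" "\<gamma> \<le> 1" and \<eta>: "0 \<le> \<eta>" "\<eta> < 1" and \<beta>: "0 < \<beta>" "\<beta> < 1"
    and M0: "0 < M0" "m0 \<le> M0"
    and lower: "loewner_le (m0 *\<^sub>R mat 1) (H0 k)" and upper: "loewner_le (H0 k) (M0 *\<^sub>R mat 1)"
  shows "spec_norm (cand2 \<beta> (H0 k) (J k)) \<le> M2tilde L \<beta> \<gamma> m0 M0 \<eta>"
proof -
  define T where "T = accept_threshold L \<gamma> \<eta>"
  obtain c where c: "cand2 \<beta> (H0 k) (J k) = H0 k + c *\<^sub>R mat 1" "0 \<le> c"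
    "c \<le> max 1 ((1 / \<beta>) * (T - m0))"
    unfolding T_def by (rule cand2_final_shift[OF run x0 \<gamma> \<eta> \<beta> lower])
  have sym: "symmetric_mat (H0 k + c *\<^sub>R mat 1)"
    using run by (simp add: alg2_run_def symmetric_mat_add_scaleR_mat1)
  have "spec_norm (H0 k + c *\<^sub>R mat 1) \<le> max \<bar>m0 + c\<bar> \<bar>M0 + c\<bar>"
    using spec_norm_le_loewner[OF sym, of "m0 + c" "M0 + c"]
      loewner_le_add_scaleR_mat1[OF lower, of c] loewner_le_add_scaleR_mat1[OF upper, of c]
    by (simp add: scaleR_add_left)
  also have "\<dots> \<le> M0 + max 1 ((1 / \<beta>) * (T - m0))"
  proof -
    define X where "X = max 1 ((1 / \<beta>) * (T - m0))"
    have "- m0 \<le> X" if "m0 < 0"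
    proof -
      have "- m0 \<le> T - m0" using accept_threshold_pos[OF L_pos \<gamma>(2) \<eta>] by (simp add: T_def)
      also have "\<dots> \<le> (1 / \<beta>) * (T - m0)"
        using \<beta> \<open>- m0 \<le> T - m0\<close> that by (simp add: le_divide_eq)
      finally show ?thesis by (simp add: X_def)
    qed
    moreover have "1 \<le> X" by (simp add: X_def)
    ultimately show ?thesis
      using c M0 unfolding X_def[symmetric] by (cases "m0 < 0") (auto simp: abs_le_iff)
  qed
  finally show ?thesis using c(1) by (simp add: M2tilde_def T_def accept_threshold_def)
qed

lemma cand1_final_scale:
  assumes run: "alg2_run (cand1 \<beta>) f g \<psi> \<gamma> \<eta> x H0 J D" and x0: "x 0 \<in> edom \<psi>"
    and \<gamma>: "0 < \<gamma>" "\<gamma> \<le> 1" and \<eta>: "0 \<le> \<eta>" "\<eta> < 1" and \<beta>: "0 < \<beta>" "\<beta> < 1"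
    and m0: "0 < m0" and lower: "loewner_le (m0 *\<^sub>R mat 1) (H0 k)"
  shows "1 / \<beta> ^ J k \<le> max 1 (accept_threshold L \<gamma> \<eta> / (\<beta> * m0))"
proof (cases "J k")
  case (Suc i)
  text \<open>The trial matrix before the accepted one was rejected.\<close>
  let ?H = "(1 / \<beta> ^ i) *\<^sub>R H0 k"
  have sym: "symmetric_mat ?H" using run by (simp add: alg2_run_def symmetric_mat_scaleR)
  have "loewner_le ((m0 / \<beta> ^ i) *\<^sub>R mat 1) ?H"
    using loewner_le_scaleR[OF _ lower, of "1 / \<beta> ^ i"] \<beta> by simp
  then have "m0 / \<beta> ^ i \<le> lambda_min ?H" by (rule lambda_min_ge_loewner[OF sym])
  moreover have "lambda_min ?H < accept_threshold L \<gamma> \<eta>"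
    using alg2_run_rejected_lambda_min[OF run x0 \<gamma> \<eta>, of k i] sym Suc by (simp add: cand1_def)
  ultimately have "m0 / \<beta> ^ i < accept_threshold L \<gamma> \<eta>" by linarith
  then have "1 / \<beta> ^ i < accept_threshold L \<gamma> \<eta> / m0" using \<beta> m0 by (simp add: field_simps)
  then have "(1 / \<beta> ^ i) / \<beta> \<le> (accept_threshold L \<gamma> \<eta> / m0) / \<beta>"
    using \<beta> by (intro divide_right_mono) auto
  then show ?thesis using Suc by (simp add: mult.commute max.coboundedI2)
qed simp

lemma cand1_final_spec_norm_le:
  assumes run: "alg2_run (cand1 \<beta>) f g \<psi> \<gamma> \<eta> x H0 J D" and x0: "x 0 \<in> edom \<psi>"
    and \<gamma>: "0 < \<gamma>" "\<gamma> \<le> 1" and \<eta>: "0 \<le> \<eta>" "\<eta> < 1" and \<beta>: "0 < \<beta>" "\<beta> < 1"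
    and m0: "0 < m0" "m0 \<le> M0"
    and lower: "loewner_le (m0 *\<^sub>R mat 1) (H0 k)" and upper: "loewner_le (H0 k) (M0 *\<^sub>R mat 1)"
  shows "spec_norm (cand1 \<beta> (H0 k) (J k)) \<le> M1tilde L \<beta> \<gamma> m0 M0 \<eta>"
proof -
  define s where "s = 1 / \<beta> ^ J k"
  have s: "0 < s" using \<beta> by (simp add: s_def)
  have sym: "symmetric_mat (s *\<^sub>R H0 k)" using run by (simp add: alg2_run_def symmetric_mat_scaleR)
  have "spec_norm (s *\<^sub>R H0 k) \<le> max \<bar>s * m0\<bar> \<bar>s * M0\<bar>"
    using spec_norm_le_loewner[OF sym, of "s * m0" "s * M0"]
      loewner_le_scaleR[OF _ lower, of s] loewner_le_scaleR[OF _ upper, of s] s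
    by simp
  also have "\<dots> = s * M0" using s m0 by (simp add: abs_of_pos max_def)
  also have "\<dots> \<le> max 1 (accept_threshold L \<gamma> \<eta> / (\<beta> * m0)) * M0"
    using cand1_final_scale[OF run x0 \<gamma> \<eta> \<beta> m0(1) lower] m0
    by (intro mult_right_mono) (auto simp: s_def)
  finally show ?thesis
    by (simp add: cand1_def s_def M1tilde_def accept_threshold_def mult.commute mult.left_commute)
qed

end

theorem lemma4:
  fixes f :: "real^'n \<Rightarrow> real" and g :: "real^'n \<Rightarrow> real^'n"
    and \<psi> :: "real^'n \<Rightarrow> ereal" and L \<gamma> :: real
  assumes grad: "\<forall>x. GDERIV f x :> g x"
    and Lpos: "L > 0"
    and Llip: "L-lipschitz_on UNIV g"
    and psi_convex: "econvex \<psi>" and psi_proper: "eproper \<psi>" and psi_closed: "eclosed \<psi>"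
    and F_bdd: "\<exists>B. \<forall>x. ereal B \<le> Fobj f \<psi> x"
    and Omega_ne: "\<exists>x. Fobj f \<psi> x = (INF y. Fobj f \<psi> y)"
    and gamma: "0 < \<gamma>" "\<gamma> \<le> 1"
  shows
    "(\<forall>x H \<sigma> \<eta> d.
        x \<in> edom \<psi> \<and> symmetric_mat H \<and> \<sigma> > 0 \<and> estrongly_convex \<sigma> (Qm g \<psi> x H)
        \<and> 0 \<le> \<eta> \<and> \<eta> < 1 \<and> inexact \<eta> (Qm g \<psi> x H) d
        \<and> (1 - \<gamma>) * ((1 - sqrt \<eta>) / (1 + sqrt \<eta>)) * \<sigma> + lambda_min H \<ge> L
        \<longrightarrow> suff_dec f \<psi> (Qm g \<psi> x H) \<gamma> x d)
     \<and> (\<forall>\<beta> \<eta> x H0 J D m0 M0.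
          0 < \<beta> \<and> \<beta> < 1 \<and> 0 \<le> \<eta> \<and> \<eta> < 1 \<and> x 0 \<in> edom \<psi>
          \<and> M0 > 0 \<and> m0 \<le> M0
          \<and> (\<forall>k. loewner_le (m0 *\<^sub>R mat 1) (H0 k) \<and> loewner_le (H0 k) (M0 *\<^sub>R mat 1))
          \<and> alg2_run (cand2 \<beta>) f g \<psi> \<gamma> \<eta> x H0 J D
          \<longrightarrow> (\<forall>k. spec_norm (cand2 \<beta> (H0 k) (J k)) \<le> M2tilde L \<beta> \<gamma> m0 M0 \<eta>))
     \<and> (\<forall>\<beta> \<eta> x H0 J D m0 M0.
          0 < \<beta> \<and> \<beta> < 1 \<and> 0 \<le> \<eta> \<and> \<eta> < 1 \<and> x 0 \<in> edom \<psi>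
          \<and> M0 > 0 \<and> 0 < m0 \<and> m0 \<le> M0
          \<and> (\<forall>k. loewner_le (m0 *\<^sub>R mat 1) (H0 k) \<and> loewner_le (H0 k) (M0 *\<^sub>R mat 1))
          \<and> alg2_run (cand1 \<beta>) f g \<psi> \<gamma> \<eta> x H0 J D
          \<longrightarrow> (\<forall>k. spec_norm (cand1 \<beta> (H0 k) (J k)) \<le> M1tilde L \<beta> \<gamma> m0 M0 \<eta>))"
proof -
  interpret composite_problem f g \<psi> L
    using grad Lpos Llip psi_convex psi_proper psi_closed by unfold_locales
  show ?thesis
    by (auto intro: sufficient_decrease[OF gamma] cand2_final_spec_norm_le[OF _ _ gamma]
        cand1_final_spec_norm_le[OF _ _ gamma])
qed

end
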